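(* Assume condition (S). Let $\Phi_n=(\phi_n,(\phi_n)'_1)$, $n\ge1$, be normalized eigenelements of $K$ as in the expansion theorem, with each $\phi_n$ real-valued (so $\phi_n$ are eigenfunctions of problem (P)). Then every $f\in L_2[-1,1]$ satisfies, with convergence in the weighted space $L_2([-1,1],r)$ (norm $\|g\|^2=\int_{-1}^1|g|^2r\,dx$), $$f(x)=\sum_{n=1}^{\infty}\Big(\int_{-1}^{1}f(y)\phi_n(y)r(y)\,dy\Big)\phi_n(x).$$
   Context: Fix $-1<h_1<h_2<1$ and put $\Omega:=[-1,h_1)\cup(h_1,h_2)\cup(h_2,1]$. Let $r,p,q$ be real-valued functions such that $r,p,p',q$ are continuous on each of $[-1,h_1)$, $(h_1,h_2)$, $(h_2,1]$ and have finite one-sided limits at $h_1$ and $h_2$ (denoted $f(h\pm 0)$), with $r(x)>0$, $p(x)>0$ on $\Omega$. Let $\alpha_1,\alpha_2,\beta_1,\beta_2,\gamma_j,\delta_j$ ($j=1,\dots,4$) be real numbers with $|\beta_1|+|\beta_2|\neq0$, all $\gamma_j\neq0$, $\delta_j\neq0$, and $\rho:=\alpha_1\beta_2-\alpha_2\beta_1>0$. Condition (S): $\delta_1\delta_2\,p(h_1-0)=\gamma_1\gamma_2\,p(h_1+0)$ and $\delta_3\delta_4\,p(h_2-0)=\gamma_3\gamma_4\,p(h_2+0)$. Put $\ell u:=\frac{1}{r(x)}\{-(p(x)u')'+q(x)u\}$, and for a function $u$ set $(u)_1:=\beta_1u(1)-\beta_2u'(1)$, $(u)'_1:=\alpha_1u(1)-\alpha_2u'(1)$.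 Problem (P): $\ell u=\lambda u$ on $\Omega$; $u(-1)=0$; $(\lambda\alpha_1+\beta_1)u(1)-(\lambda\alpha_2+\beta_2)u'(1)=0$; $\gamma_1u(h_1-0)=\delta_1u(h_1+0)$, $\gamma_2u'(h_1-0)=\delta_2u'(h_1+0)$, $\gamma_3u(h_2-0)=\delta_3u(h_2+0)$, $\gamma_4u'(h_2-0)=\delta_4u'(h_2+0)$. Let $H=L_2[-1,1]\oplus\mathbb{C}$ with inner product $\langle T,G\rangle:=\int_{-1}^{1}T_1\overline{G_1}r\,dx+\frac{p(1)}{\rho}T_2\overline{G_2}$. The operator $K$ has domain $D(K)$ of those $T=(T_1,T_2)\in H$ with $T_1,T_1'$ absolutely continuous on each of the three subintervals, finite limits $T_1(h_i\pm0),T_1'(h_i\pm0)$, $\ell T_1\in L_2[-1,1]$, $T_1$ satisfying $T_1(-1)=0$ and the four transmission conditions above, and $T_2=(T_1)'_1$; $KT:=(\ell T_1,-(T_1)_1)$. Under (S), $K$ has real eigenvalues $\lambda_1\le\lambda_2\le\cdots$ (with multiplicity) and eigenelements $\Phi_n=(\phi_n,(\phi_n)'_1)$, $\|\Phi_n\|_H=1$, such that $T=\sum_n\langle T,\Phi_n\rangle\Phi_n$ in $H$ for every $T\in H$. *)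

theory Defs
  imports "HOL-Analysis.Analysis"
begin

definition Omega :: "real \<Rightarrow> real \<Rightarrow> real set" where
  "Omega h1 h2 = {-1..<h1} \<union> {h1<..<h2} \<union> {h2<..1}"

definition piece_cont :: "real \<Rightarrow> real \<Rightarrow> (real \<Rightarrow> real) \<Rightarrow> bool" where
  "piece_cont h1 h2 f \<longleftrightarrow>
     continuous_on {-1..<h1} f \<and> continuous_on {h1<..<h2} f \<and> continuous_on {h2<..1} f \<and>
     (\<exists>l. (f \<longlongrightarrow> l) (at_left h1)) \<and> (\<exists>l. (f \<longlongrightarrow> l) (at_right h1)) \<and>
     (\<exists>l. (f \<longlongrightarrow> l) (at_left h2)) \<and> (\<exists>l. (f \<longlongrightarrow> l) (at_right h2))"

definition abs_cont_on :: "real \<Rightarrow> real \<Rightarrow> (real \<Rightarrow> real) \<Rightarrow> bool" where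
  "abs_cont_on a b f \<longleftrightarrow>
     (\<forall>\<epsilon>>0. \<exists>\<delta>>0. \<forall>(n::nat) (aa::nat \<Rightarrow> real) bb.
        (\<forall>k<n. a \<le> aa k \<and> aa k \<le> bb k \<and> bb k \<le> b) \<and>
        (\<forall>k<n. \<forall>j<n. k \<noteq> j \<longrightarrow> bb k \<le> aa j \<or> bb j \<le> aa k) \<and>
        (\<Sum>k<n. bb k - aa k) < \<delta>
        \<longrightarrow> (\<Sum>k<n. \<bar>f (bb k) - f (aa k)\<bar>) < \<epsilon>)"

definition loc_abs_cont :: "real set \<Rightarrow> (real \<Rightarrow> real) \<Rightarrow> bool" where
  "loc_abs_cont I f \<longleftrightarrow> (\<forall>a b. a \<le> b \<longrightarrow> {a..b} \<subseteq> I \<longrightarrow> abs_cont_on a b f)"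

definition L2 :: "(real \<Rightarrow> 'a::{banach,second_countable_topology}) \<Rightarrow> bool" where
  "L2 f \<longleftrightarrow> set_borel_measurable lborel {-1..1} f \<and>
            set_integrable lborel {-1..1} (\<lambda>x. (norm (f x))\<^sup>2)"

text \<open>KDom h1 h2 r p q \<gamma> \<delta> u u' w: the (real-valued) function u, with derivative u'
  (one-sided at the ends of the subintervals), satisfies the conditions of the first component
  of an element of D(K), and w = l u (a.e. on Omega), where
  l u = (1/r) (-(p u')' + q u).\<close>
definition KDom :: "real \<Rightarrow> real \<Rightarrow> (real \<Rightarrow> real) \<Rightarrow> (real \<Rightarrow> real) \<Rightarrow> (real \<Rightarrow> real)
    \<Rightarrow> (nat \<Rightarrow> real) \<Rightarrow> (nat \<Rightarrow> real)
    \<Rightarrow> (real \<Rightarrow> real) \<Rightarrow> (real \<Rightarrow> real) \<Rightarrow> (real \<Rightarrow> real) \<Rightarrow> bool" where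
  "KDom h1 h2 r p q \<gamma> \<delta> u u' w \<longleftrightarrow>
     (\<forall>I\<in>{{-1..<h1}, {h1<..<h2}, {h2<..1}}.
        (\<forall>x\<in>I. (u has_real_derivative u' x) (at x within I)) \<and>
        loc_abs_cont I u \<and> loc_abs_cont I u') \<and>
     (\<exists>a b. (u \<longlongrightarrow> a) (at_left h1) \<and> (u \<longlongrightarrow> b) (at_right h1) \<and> \<gamma> 1 * a = \<delta> 1 * b) \<and>
     (\<exists>a b. (u' \<longlongrightarrow> a) (at_left h1) \<and> (u' \<longlongrightarrow> b) (at_right h1) \<and> \<gamma> 2 * a = \<delta> 2 * b) \<and>
     (\<exists>a b. (u \<longlongrightarrow> a) (at_left h2) \<and> (u \<longlongrightarrow> b) (at_right h2) \<and> \<gamma> 3 * a = \<delta> 3 * b) \<and>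
     (\<exists>a b. (u' \<longlongrightarrow> a) (at_left h2) \<and> (u' \<longlongrightarrow> b) (at_right h2) \<and> \<gamma> 4 * a = \<delta> 4 * b) \<and>
     u (-1) = 0 \<and>
     (AE x in lborel. x \<in> Omega h1 h2 \<longrightarrow>
        ((\<lambda>t. p t * u' t) has_real_derivative (q x * u x - r x * w x)) (at x)) \<and>
     L2 w"

definition Hinner :: "(real \<Rightarrow> real) \<Rightarrow> (real \<Rightarrow> real) \<Rightarrow> real
    \<Rightarrow> (real \<Rightarrow> complex) \<Rightarrow> complex \<Rightarrow> (real \<Rightarrow> complex) \<Rightarrow> complex \<Rightarrow> complex" where
  "Hinner r p \<rho> T1 T2 G1 G2 =
     (LINT x:{-1..1}|lborel. T1 x * cnj (G1 x) * of_real (r x)) + of_real (p 1 / \<rho>) * T2 * cnj G2"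

end

theory Submission
  imports Defs
begin

(* Embed f into H = L_2[-1,1] (+) C as the element (f, 0).  Its Fourier
   coefficients with respect to the eigenelements Phi_n = (phi_n, (phi_n)'_1) are
   <(f,0), Phi_n> = int f phi_n r dx, because the second component of (f,0) vanishes.
   The expansion theorem says that the H-norm of the residual of the N-th partial sum
   tends to 0.  That squared H-norm is the sum of two nonnegative parts: the weighted
   L_2 norm of the first-component residual (nonnegative since r > 0 off the two
   interface points, a null set) and p(1)/rho times the squared modulus of the
   second-component residual (nonnegative since p(1) > 0 and rho > 0).  Squeezing the
   first part between 0 and the total gives the claimed convergence in L_2([-1,1],r). *)

lemma Hinner_self:
  "Hinner r p \<rho> T1 T2 T1 T2
     = of_real ((LINT x:{-1..1}|lborel. (cmod (T1 x))\<^sup>2 * r x) + p 1 / \<rho> * (cmod T2)\<^sup>2)"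
proof -
  have integrand: "(\<lambda>x. T1 x * cnj (T1 x) * complex_of_real (r x))
      = (\<lambda>x. complex_of_real ((cmod (T1 x))\<^sup>2 * r x))"
    by (rule ext) (simp add: complex_norm_square[symmetric])
  show ?thesis
    unfolding Hinner_def integrand set_integral_complex_of_real
    by (simp add: complex_norm_square[symmetric])
qed

lemma Hinner_zero_second:
  "Hinner r p \<rho> T1 0 (\<lambda>x. of_real (g x)) G2
     = (LINT y:{-1..1}|lborel. T1 y * of_real (g y) * of_real (r y))"
  by (simp add: Hinner_def)

lemma weighted_sq_integral_nonneg:
  assumes "AE x in lborel. x \<in> {-1..1} \<longrightarrow> 0 \<le> r x"
  shows "0 \<le> (LINT x:{-1..1}|lborel. (cmod (g x))\<^sup>2 * r x)"
  unfolding set_lebesgue_integral_def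
proof (rule integral_nonneg_AE)
  show "AE x in lborel. 0 \<le> indicator {-1..1} x *\<^sub>R ((cmod (g x))\<^sup>2 * r x)"
    using assms by eventually_elim (simp add: indicator_def)
qed

text \<open>The interval [-1,1] differs from Omega only by the null set {h1,h2}, so a weight
  positive on Omega is nonnegative almost everywhere on [-1,1].\<close>
lemma Omega_pos_AE:
  fixes r :: "real \<Rightarrow> real"
  assumes "\<forall>x\<in>Omega h1 h2. r x > 0"
  shows "AE x in lborel. x \<in> {-1..1} \<longrightarrow> 0 \<le> r x"
proof -
  have "AE x in lborel. x \<noteq> h1 \<and> x \<noteq> h2"
    using AE_lborel_singleton[of h1] AE_lborel_singleton[of h2] by eventually_elim auto
  then show ?thesis
  proof eventually_elim
    case (elim x)
    show ?case
    proof
      assume "x \<in> {-1..1}"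
      with elim have "x \<in> Omega h1 h2" by (auto simp: Omega_def)
      with assms show "0 \<le> r x" by (simp add: less_imp_le)
    qed
  qed
qed

lemma tendsto_zero_nonneg_summand:
  fixes a b :: "nat \<Rightarrow> real"
  assumes "\<And>N. 0 \<le> a N" "\<And>N. 0 \<le> b N" "(\<lambda>N. a N + b N) \<longlonglongrightarrow> 0"
  shows "a \<longlonglongrightarrow> 0"
proof (rule tendsto_sandwich[OF _ _ tendsto_const assms(3)])
  show "\<forall>\<^sub>F N in sequentially. 0 \<le> a N" using assms(1) by simp
  show "\<forall>\<^sub>F N in sequentially. a N \<le> a N + b N" using assms(2) by simp
qed

theorem corollary4p1:
  fixes h1 h2 :: real
    and r p p' q :: "real \<Rightarrow> real"
    and \<alpha>1 \<alpha>2 \<beta>1 \<beta>2 :: real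
    and \<gamma> \<delta> :: "nat \<Rightarrow> real"
    and lam :: "nat \<Rightarrow> real"
    and \<phi> \<phi>d :: "nat \<Rightarrow> real \<Rightarrow> real"
    and f :: "real \<Rightarrow> complex"
  assumes h: "-1 < h1" "h1 < h2" "h2 < 1"
    and r_cont: "piece_cont h1 h2 r"
    and p_cont: "piece_cont h1 h2 p"
    and p'_cont: "piece_cont h1 h2 p'"
    and q_cont: "piece_cont h1 h2 q"
    and p_deriv: "\<forall>I\<in>{{-1..<h1}, {h1<..<h2}, {h2<..1}}.
                    \<forall>x\<in>I. (p has_real_derivative p' x) (at x within I)"
    and r_pos: "\<forall>x\<in>Omega h1 h2. r x > 0"
    and p_pos: "\<forall>x\<in>Omega h1 h2. p x > 0"
    and beta: "\<bar>\<beta>1\<bar> + \<bar>\<beta>2\<bar> \<noteq> 0"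
    and gamma: "\<forall>j\<in>{1..4}. \<gamma> j \<noteq> 0"
    and delta: "\<forall>j\<in>{1..4}. \<delta> j \<noteq> 0"
    and rho: "\<alpha>1 * \<beta>2 - \<alpha>2 * \<beta>1 > 0"
    and S: "\<delta> 1 * \<delta> 2 * Lim (at_left h1) p = \<gamma> 1 * \<gamma> 2 * Lim (at_right h1) p"
           "\<delta> 3 * \<delta> 4 * Lim (at_left h2) p = \<gamma> 3 * \<gamma> 4 * Lim (at_right h2) p"
    and lam_mono: "mono lam"
    and eigen_dom: "\<And>n. KDom h1 h2 r p q \<gamma> \<delta> (\<phi> n) (\<phi>d n) (\<lambda>x. lam n * \<phi> n x)"
    and eigen_bc: "\<And>n. - (\<beta>1 * \<phi> n 1 - \<beta>2 * \<phi>d n 1) = lam n * (\<alpha>1 * \<phi> n 1 - \<alpha>2 * \<phi>d n 1)"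
    and normalized: "\<And>n. Hinner r p (\<alpha>1 * \<beta>2 - \<alpha>2 * \<beta>1)
                        (\<lambda>x. of_real (\<phi> n x)) (of_real (\<alpha>1 * \<phi> n 1 - \<alpha>2 * \<phi>d n 1))
                        (\<lambda>x. of_real (\<phi> n x)) (of_real (\<alpha>1 * \<phi> n 1 - \<alpha>2 * \<phi>d n 1)) = 1"
    and expansion: "\<And>(T1 :: real \<Rightarrow> complex) (T2 :: complex). L2 T1 \<Longrightarrow>
        (let \<rho> = \<alpha>1 * \<beta>2 - \<alpha>2 * \<beta>1;
             c = (\<lambda>n. Hinner r p \<rho> T1 T2
                        (\<lambda>x. of_real (\<phi> n x)) (of_real (\<alpha>1 * \<phi> n 1 - \<alpha>2 * \<phi>d n 1)));
             R1 = (\<lambda>N x. T1 x - (\<Sum>n<N. c n * of_real (\<phi> n x)));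
             R2 = (\<lambda>N. T2 - (\<Sum>n<N. c n * of_real (\<alpha>1 * \<phi> n 1 - \<alpha>2 * \<phi>d n 1)))
         in (\<lambda>N. Hinner r p \<rho> (R1 N) (R2 N) (R1 N) (R2 N)) \<longlonglongrightarrow> 0)"
    and f_L2: "L2 f"
  shows "(\<lambda>N. LINT x:{-1..1}|lborel.
            (cmod (f x - (\<Sum>n<N. (LINT y:{-1..1}|lborel. f y * of_real (\<phi> n y) * of_real (r y))
                                  * of_real (\<phi> n x))))\<^sup>2 * r x) \<longlonglongrightarrow> 0"
proof -
  define \<rho> where "\<rho> = \<alpha>1 * \<beta>2 - \<alpha>2 * \<beta>1"
  define c where "c n = (LINT y:{-1..1}|lborel. f y * of_real (\<phi> n y) * of_real (r y))" for n
  define R1 where "R1 N x = f x - (\<Sum>n<N. c n * of_real (\<phi> n x))" for N x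
  define R2 where "R2 N = - (\<Sum>n<N. c n * of_real (\<alpha>1 * \<phi> n 1 - \<alpha>2 * \<phi>d n 1))" for N
  define A where "A N = (LINT x:{-1..1}|lborel. (cmod (R1 N x))\<^sup>2 * r x)" for N
  define B where "B N = p 1 / \<rho> * (cmod (R2 N))\<^sup>2" for N
  \<comment> \<open>Expansion of (f,0): its coefficients are the weighted integrals c n.\<close>
  have "(\<lambda>N. Hinner r p \<rho> (R1 N) (R2 N) (R1 N) (R2 N)) \<longlonglongrightarrow> 0"
    using expansion[OF f_L2, of 0]
    unfolding Let_def \<rho>_def[symmetric] Hinner_zero_second c_def[symmetric]
    by (simp add: R1_def[abs_def] R2_def)
  then have "(\<lambda>N. Re (of_real (A N + B N))) \<longlonglongrightarrow> Re 0"
    unfolding Hinner_self A_def[symmetric] B_def[symmetric] by (rule tendsto_Re)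
  then have sum_lim: "(\<lambda>N. A N + B N) \<longlonglongrightarrow> 0" by simp
  have "p 1 > 0" using p_pos h by (auto simp: Omega_def)
  then have B_nonneg: "0 \<le> B N" for N using rho by (simp add: B_def \<rho>_def)
  have A_nonneg: "0 \<le> A N" for N
    unfolding A_def by (rule weighted_sq_integral_nonneg[OF Omega_pos_AE[OF r_pos]])
  have "A \<longlonglongrightarrow> 0" by (rule tendsto_zero_nonneg_summand[OF A_nonneg B_nonneg sum_lim])
  then show ?thesis unfolding A_def R1_def c_def .
qed

end
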